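(* Let $A$ be a real $n\times n$ matrix acting on $H=\mathbb{R}^n$ (Euclidean inner product $\langle\cdot,\cdot\rangle$, norm $\|\cdot\|$) and let $\lambda$ be a real eigenvalue of $A$. Let $u_0\in\operatorname{Ker}(A-\lambda I)$ with $\|u_0\|=1$ and all components of $u_0$ nonzero, and let $\eta_0\in\mathbb{R}$ satisfy $$\langle |u_0|+\eta_0u_0,\,v\rangle=0\quad\text{for all } v\in\operatorname{Ker}(A^*-\lambda I).$$ Assume moreover the nondegeneracy condition: whenever $c\in\mathbb{R}$ and $w\in\operatorname{Ker}(A-\lambda I)$ satisfy $\langle u_0,w\rangle=0$ and $$Q\big(\Xi(u_0)w+\eta_0 w\big)+c\,Qu_0=0,$$ then $w=0$ and $c=0$. Then there exist a neighborhood $E$ of $0$ in $\mathbb{R}$ and continuous functions $\eta:E\to\mathbb{R}$, $u:E\to H$ with $u(0)=u_0$, $\eta(0)=\eta_0$, such that $$(A-\lambda I)u(\varepsilon)=\varepsilon\big(|u(\varepsilon)|+\eta(\varepsilon)u(\varepsilon)\big),\qquad \|u(\varepsilon)\|=1,\qquad \varepsilon\in E;$$ i.e. $\big(\lambda+\varepsilon(\eta(\varepsilon)+1),\ \lambda+\varepsilon(\eta(\varepsilon)-1)\big)$, $\varepsilon\in E$, describes a part of a Fučík curve of $A$ emanating from $(\lambda,\lambda)$ in the $\alpha\beta$-plane.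
   Context: $A^*$ is the transpose of $A$. $Q$ denotes the orthogonal projection of $\mathbb{R}^n$ onto $\operatorname{Ker}(A^*-\lambda I)$. For $u\in\mathbb{R}^n$, $|u|=[|u_1|,\dots,|u_n|]^t$ and $\Xi(u)=\operatorname{diag}(\operatorname{sgn}u_1,\dots,\operatorname{sgn}u_n)$. The Fučík spectrum of $A$ is the set of $(\alpha,\beta)\in\mathbb{R}^2$ for which $Au=\alpha u^+-\beta u^-$ has a nontrivial solution, where $u_i^+=\max\{u_i,0\}$, $u_i^-=\max\{-u_i,0\}$; with $\alpha=\varepsilon(\eta+1)+\lambda$, $\beta=\varepsilon(\eta-1)+\lambda$ this problem is equivalent to $(A-\lambda I)u=\varepsilon(|u|+\eta u)$. *)

theory Defs
  imports "HOL-Analysis.Analysis"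
begin

definition mat_ker :: "real^'n^'n \<Rightarrow> (real^'n) set" where
  "mat_ker M = {v. M *v v = 0}"

definition orth_proj :: "(real^'n) set \<Rightarrow> real^'n \<Rightarrow> real^'n" where
  "orth_proj S x = (THE y. y \<in> S \<and> (\<forall>v\<in>S. (x - y) \<bullet> v = 0))"

definition vabs :: "real^'n \<Rightarrow> real^'n" where
  "vabs u = (\<chi> i. \<bar>u $ i\<bar>)"

definition Xi :: "real^'n \<Rightarrow> real^'n^'n" where
  "Xi u = (\<chi> i j. if i = j then sgn (u $ i) else 0)"

end

theory Submission
  imports Defs
begin

text \<open>Near \<open>u0\<close> all components keep their signs, so \<open>vabs u = Xi u0 *v u\<close> there and the
  Fucik equation becomes smooth. Write \<open>M = A - lam I\<close> and \<open>Q\<close> for the orthogonal projection onto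
  \<open>Ker M\<^sup>T\<close>, which annihilates the range of \<open>M\<close>. The map
  \<open>(e, v, \<eta>) \<mapsto> (M v - e y + Q y, u0 \<bullet> v - 1)\<close> with \<open>y = Xi u0 *v v + \<eta> v\<close> vanishes at
  \<open>(0, u0, \<eta>0)\<close> by the choice of \<open>\<eta>0\<close>, and the nondegeneracy condition says precisely that its
  derivative in \<open>(v, \<eta>)\<close> there is injective. The implicit function theorem therefore gives a
  continuous branch of zeros \<open>(v(e), \<eta>(e))\<close>. Applying \<open>Q\<close> to such a zero gives
  \<open>(1 - e) Q y = 0\<close>, so for \<open>e < 1\<close> the added term \<open>Q y\<close> vanishes and \<open>M v = e y\<close>;
  normalising \<open>v\<close> yields \<open>u\<close>.\<close>

lemma subspace_mat_ker: "subspace (mat_ker M)"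
  unfolding mat_ker_def subspace_def
  by (auto simp: matrix_vector_right_distrib matrix_vector_mult_scaleR)

lemma orth_proj_eqI:
  assumes S: "subspace S" and "y \<in> S" and "\<And>v. v \<in> S \<Longrightarrow> (x - y) \<bullet> v = 0"
  shows "orth_proj S x = y"
  unfolding orth_proj_def
proof (rule the_equality)
  fix z assume z: "z \<in> S \<and> (\<forall>v\<in>S. (x - z) \<bullet> v = 0)"
  have "z - y \<in> S" using z assms by (simp add: subspace_diff)
  then have "(x - y) \<bullet> (z - y) = 0" "(x - z) \<bullet> (z - y) = 0" using assms z by auto
  then have "(z - y) \<bullet> (z - y) = 0" by (simp add: inner_diff_left)
  then show "z = y" by simp
qed (use assms in auto)

lemma orth_proj_eq_iff:
  assumes S: "subspace S"
  shows "orth_proj S x = y \<longleftrightarrow> y \<in> S \<and> (\<forall>v\<in>S. (x - y) \<bullet> v = 0)"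
proof -
  obtain p z where "p \<in> span S" and "\<And>w. w \<in> span S \<Longrightarrow> orthogonal z w" and "x = p + z"
    by (rule orthogonal_subspace_decomp_exists[of S x]) fast
  moreover have "span S = S" using S by (simp add: span_eq_iff)
  ultimately have p: "p \<in> S \<and> (\<forall>v\<in>S. (x - p) \<bullet> v = 0)"
    by (simp add: orthogonal_def)
  then have "orth_proj S x = p" using orth_proj_eqI[OF S] by blast
  then show ?thesis using p orth_proj_eqI[OF S] by blast
qed

lemma orth_proj_in:
  assumes "subspace S" shows "orth_proj S x \<in> S"
  using orth_proj_eq_iff[OF assms] by blast

lemma orth_proj_residual_orthogonal:
  assumes "subspace S" and "v \<in> S" shows "(x - orth_proj S x) \<bullet> v = 0"
  using orth_proj_eq_iff[OF assms(1)] assms(2) by blast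

lemma linear_orth_proj:
  assumes S: "subspace S" shows "linear (orth_proj S)"
proof
  fix x y
  have "(x + y - (orth_proj S x + orth_proj S y)) \<bullet> v = 0" if "v \<in> S" for v
    using orth_proj_residual_orthogonal[OF S that, of x] orth_proj_residual_orthogonal[OF S that, of y]
    by (simp add: inner_diff_left inner_add_left)
  then show "orth_proj S (x + y) = orth_proj S x + orth_proj S y"
    by (simp add: orth_proj_eqI S subspace_add orth_proj_in)
next
  fix c x
  show "orth_proj S (c *\<^sub>R x) = c *\<^sub>R orth_proj S x"
    by (rule orth_proj_eqI)
      (simp_all add: S subspace_scale orth_proj_in orth_proj_residual_orthogonal
        flip: scaleR_diff_right)
qed

lemma orth_proj_idem:
  assumes "subspace S" shows "orth_proj S (orth_proj S x) = orth_proj S x"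
  using assms by (simp add: orth_proj_eqI orth_proj_in)

lemma orth_proj_eq_0_iff:
  assumes "subspace S" shows "orth_proj S x = 0 \<longleftrightarrow> (\<forall>v\<in>S. x \<bullet> v = 0)"
  using assms by (simp add: orth_proj_eq_iff subspace_0)

lemma orth_proj_ker_transpose_range: "orth_proj (mat_ker (transpose M)) (M *v w) = 0"
proof -
  have "(M *v w) \<bullet> v = (v v* M) \<bullet> w" for v
    by (metis dot_lmul_matrix inner_commute)
  then show ?thesis
    unfolding orth_proj_eq_0_iff[OF subspace_mat_ker] by (simp add: mat_ker_def)
qed

lemma inverse_function_theorem_inj:
  fixes f :: "'a::euclidean_space \<Rightarrow> 'a"
  assumes U: "open U" "x0 \<in> U"
    and f': "\<And>x. x \<in> U \<Longrightarrow> (f has_derivative f' x) (at x)"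
    and f'_cont: "\<And>h. continuous_on U (\<lambda>x. f' x h)"
    and inj: "inj (f' x0)"
  obtains U' V g where "x0 \<in> U'" "open V" "f x0 \<in> V" "homeomorphism U' V f g"
proof -
  have lin: "bounded_linear (f' x)" if "x \<in> U" for x
    using has_derivative_bounded_linear f' that by blast
  obtain L where "linear L" "L \<circ> f' x0 = id"
    using linear_injective_left_inverse lin U inj by (metis bounded_linear.linear)
  then have inv: "Blinfun L o\<^sub>L Blinfun (f' x0) = id_blinfun"
    by (intro blinfun_eqI) (simp add: bounded_linear_Blinfun_apply lin U
        linear_conv_bounded_linear pointfree_idE)
  have cont: "continuous_on U (\<lambda>x. Blinfun (f' x))"
  proof (rule continuous_on_blinfun_componentwise)
    fix h
    show "continuous_on U (\<lambda>x. blinfun_apply (Blinfun (f' x)) h)"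
      using f'_cont[of h]
      by (rule continuous_on_cong[THEN iffD1, rotated 2]) (simp_all add: bounded_linear_Blinfun_apply lin)
  qed
  have "(f has_derivative blinfun_apply (Blinfun (f' x))) (at x)" if "x \<in> U" for x
    using f' lin that by (simp add: bounded_linear_Blinfun_apply)
  then show thesis
    by (rule inverse_function_theorem[OF U(1) _ cont U(2) inv]) (auto intro: that)
qed

lemma implicit_function_theorem:
  fixes G :: "'a::euclidean_space \<times> 'b::euclidean_space \<Rightarrow> 'b"
  assumes U: "open U" "(p0, x0) \<in> U"
    and G': "\<And>z. z \<in> U \<Longrightarrow> (G has_derivative G' z) (at z)"
    and G'_cont: "\<And>h. continuous_on U (\<lambda>z. G' z h)"
    and zero: "G (p0, x0) = 0"
    and inj: "inj (\<lambda>h. G' (p0, x0) (0, h))"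
  obtains E x where "open E" "p0 \<in> E" "continuous_on E x" "x p0 = x0"
    "\<And>p. p \<in> E \<Longrightarrow> G (p, x p) = 0"
proof -
  define F where "F z = (fst z, G z)" for z
  define F' where "F' z h = (fst h, G' z h)" for z h
  have F': "(F has_derivative F' z) (at z)" if "z \<in> U" for z
    unfolding F_def[abs_def] F'_def[abs_def]
    by (intro has_derivative_Pair has_derivative_fst has_derivative_ident G' that)
  have "inj (F' (p0, x0))"
  proof (subst linear_injective_0)
    show "linear (F' (p0, x0))"
      using has_derivative_bounded_linear[OF F'[OF U(2)]] by (simp add: bounded_linear.linear)
    have "G' (p0, x0) (0, 0) = 0"
      using has_derivative_bounded_linear[OF G'[OF U(2)]]
      by (simp add: linear_simps flip: zero_prod_def)
    then show "\<forall>h. F' (p0, x0) h = 0 \<longrightarrow> h = 0"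
      using inj by (auto simp: F'_def inj_def zero_prod_def)
  qed
  moreover have "continuous_on U (\<lambda>z. F' z h)" for h
    unfolding F'_def by (intro continuous_intros G'_cont)
  ultimately obtain U' V g where "(p0, x0) \<in> U'" "open V" "F (p0, x0) \<in> V"
    and hom: "homeomorphism U' V F g"
    using inverse_function_theorem_inj[OF U F'] by blast
  define E where "E = (\<lambda>p. (p, 0)) -` V"
  define x where "x p = snd (g (p, 0))" for p
  have F_g: "F (g (p, 0)) = (p, 0)" if "p \<in> E" for p
    using hom that by (simp add: E_def homeomorphism_def)
  show thesis
  proof
    show "open E" unfolding E_def by (intro open_vimage continuous_intros \<open>open V\<close>)
    show "p0 \<in> E" using \<open>F (p0, x0) \<in> V\<close> zero by (simp add: E_def F_def)
    have "continuous_on V g" using hom by (simp add: homeomorphism_def)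
    then have "continuous_on E (\<lambda>p. g (p, 0))"
      by (rule continuous_on_compose2) (auto simp: E_def intro!: continuous_intros)
    then show "continuous_on E x" unfolding x_def by (rule continuous_on_snd)
    have "g (F (p0, x0)) = (p0, x0)"
      using hom \<open>(p0, x0) \<in> U'\<close> by (simp add: homeomorphism_def)
    then show "x p0 = x0" using zero by (simp add: x_def F_def)
    show "G (p, x p) = 0" if "p \<in> E" for p
    proof -
      have "fst (g (p, 0)) = p" "G (g (p, 0)) = 0" using F_g[OF that] by (simp_all add: F_def)
      then show ?thesis by (metis x_def prod.collapse)
    qed
  qed
qed

lemma transpose_diff: "transpose (A - B) = transpose A - transpose (B :: 'a::ring_1^'n^'m)"
  by (simp add: transpose_def vec_eq_iff)

lemma Xi_mult_eq_vabs:
  assumes "\<forall>i. 0 < v $ i * u $ i"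
  shows "Xi u *v v = vabs v"
proof -
  have "(Xi u *v v) $ i = sgn (u $ i) * v $ i" for i
    by (simp add: Xi_def matrix_vector_mult_def if_distrib if_distribR cong: if_cong)
  moreover have "sgn (u $ i) * v $ i = \<bar>v $ i\<bar>" for i
    using assms[rule_format, of i] by (auto simp: sgn_if zero_less_mult_iff)
  ultimately show ?thesis by (simp add: vabs_def vec_eq_iff)
qed

lemma vabs_scaleR: "0 \<le> c \<Longrightarrow> vabs (c *\<^sub>R v) = c *\<^sub>R vabs v"
  by (simp add: vabs_def vec_eq_iff abs_mult)

lemma open_same_signs: "open {v::real^'n. \<forall>i. 0 < v $ i * u $ i}"
proof -
  have "{v::real^'n. \<forall>i. 0 < v $ i * u $ i} = (\<Inter>i. {v. 0 < v $ i * u $ i})" by auto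
  then show ?thesis by (auto intro!: open_INT open_Collect_less continuous_intros)
qed

definition fucik_map :: "real^'n^'n \<Rightarrow> real^'n \<Rightarrow> real \<times> (real^'n) \<times> real \<Rightarrow> (real^'n) \<times> real" where
  "fucik_map M u0 = (\<lambda>(e, v, \<eta>). let y = Xi u0 *v v + \<eta> *\<^sub>R v in
     (M *v v - e *\<^sub>R y + orth_proj (mat_ker (transpose M)) y, u0 \<bullet> v - 1))"

definition fucik_map_deriv ::
    "real^'n^'n \<Rightarrow> real^'n \<Rightarrow> real \<times> (real^'n) \<times> real \<Rightarrow> real \<times> (real^'n) \<times> real \<Rightarrow> (real^'n) \<times> real" where
  "fucik_map_deriv M u0 = (\<lambda>(e, v, \<eta>) (a, w, c).
     let y = Xi u0 *v v + \<eta> *\<^sub>R v; y' = Xi u0 *v w + \<eta> *\<^sub>R w + c *\<^sub>R v in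
     (M *v w - a *\<^sub>R y - e *\<^sub>R y' + orth_proj (mat_ker (transpose M)) y', u0 \<bullet> w))"

lemma has_derivative_fucik_map:
  "(fucik_map M u0 has_derivative fucik_map_deriv M u0 z) (at z)"
proof -
  have Q: "bounded_linear (orth_proj (mat_ker (transpose M)))"
    by (simp add: linear_orth_proj subspace_mat_ker flip: linear_conv_bounded_linear)
  show ?thesis
    unfolding fucik_map_def fucik_map_deriv_def split_beta' Let_def
    by (rule has_derivative_eq_rhs,
        (rule has_derivative_add has_derivative_diff has_derivative_scaleR has_derivative_Pair
          has_derivative_const has_derivative_fst has_derivative_snd has_derivative_ident
          bounded_linear.has_derivative[OF Q]
          bounded_linear.has_derivative[OF matrix_vector_mul_bounded_linear]
          bounded_linear.has_derivative[OF bounded_linear_inner_right])+)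
      (simp add: fun_eq_iff algebra_simps)
qed

lemma continuous_on_fucik_map_deriv: "continuous_on S (\<lambda>z. fucik_map_deriv M u0 z h)"
proof -
  have Q: "linear (orth_proj (mat_ker (transpose M)))"
    by (simp add: linear_orth_proj subspace_mat_ker)
  show ?thesis
    unfolding fucik_map_deriv_def split_beta' Let_def
    by (intro continuous_intros linear_continuous_on_compose[OF _ Q]
        linear_continuous_on_compose[OF _ matrix_vector_mul_linear])
qed

lemma orth_proj_ker_transpose_eq_0:
  assumes "M *v v + x = 0"
  shows "orth_proj (mat_ker (transpose M)) x = 0"
proof -
  have "x = - (M *v v)" using assms by (simp add: eq_neg_iff_add_eq_0 add.commute)
  also have "\<dots> = M *v (- v)" by (simp add: linear_neg[OF matrix_vector_mul_linear])
  finally show ?thesis by (simp add: orth_proj_ker_transpose_range)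
qed

lemma fucik_map_base_point:
  assumes "M *v u0 = 0" and "norm u0 = 1" and "\<forall>i. u0 $ i \<noteq> 0"
    and "\<forall>v \<in> mat_ker (transpose M). (vabs u0 + \<eta>0 *\<^sub>R u0) \<bullet> v = 0"
  shows "fucik_map M u0 (0, u0, \<eta>0) = 0"
proof -
  have "Xi u0 *v u0 = vabs u0"
    using assms(3) by (intro Xi_mult_eq_vabs) (metis not_real_square_gt_zero)
  moreover have "orth_proj (mat_ker (transpose M)) (vabs u0 + \<eta>0 *\<^sub>R u0) = 0"
    using assms(4) by (simp add: orth_proj_eq_0_iff subspace_mat_ker)
  moreover have "u0 \<bullet> u0 = 1" using assms(2) by (simp add: dot_square_norm)
  ultimately show ?thesis using assms(1) by (simp add: fucik_map_def zero_prod_def)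
qed

lemma inj_fucik_map_deriv:
  assumes "M *v u0 = 0"
    and nondeg: "\<And>c w. w \<in> mat_ker M \<Longrightarrow> u0 \<bullet> w = 0 \<Longrightarrow>
        orth_proj (mat_ker (transpose M)) (Xi u0 *v w + \<eta>0 *\<^sub>R w)
        + c *\<^sub>R orth_proj (mat_ker (transpose M)) u0 = 0 \<Longrightarrow> w = 0 \<and> c = 0"
  shows "inj (\<lambda>h. fucik_map_deriv M u0 (0, u0, \<eta>0) (0, h))"
proof -
  let ?Q = "orth_proj (mat_ker (transpose M))"
  have Q: "linear ?Q" by (simp add: linear_orth_proj subspace_mat_ker)
  have "bounded_linear (\<lambda>h. fucik_map_deriv M u0 (0, u0, \<eta>0) (0, h))"
    using has_derivative_bounded_linear[OF has_derivative_fucik_map]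
    by (rule bounded_linear_compose) (intro bounded_linear_Pair bounded_linear_zero bounded_linear_ident)
  moreover have "h = 0" if "fucik_map_deriv M u0 (0, u0, \<eta>0) (0, h) = 0" for h
  proof -
    obtain w c where h: "h = (w, c)" by fastforce
    let ?y = "Xi u0 *v w + \<eta>0 *\<^sub>R w + c *\<^sub>R u0"
    have eq: "M *v w + ?Q ?y = 0" and "u0 \<bullet> w = 0"
      using that by (simp_all add: fucik_map_deriv_def h zero_prod_def)
    have "?Q ?y = 0"
      using orth_proj_ker_transpose_eq_0[OF eq] by (simp add: orth_proj_idem subspace_mat_ker)
    then have "M *v w = 0" and "?Q (Xi u0 *v w + \<eta>0 *\<^sub>R w) + c *\<^sub>R ?Q u0 = 0"
      using eq by (simp_all add: linear_add[OF Q] linear_scale[OF Q])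
    with \<open>u0 \<bullet> w = 0\<close> show "h = 0"
      using nondeg[of w c] by (simp add: h mat_ker_def zero_prod_def)
  qed
  ultimately show ?thesis
    by (simp add: linear_injective_0 bounded_linear.linear)
qed

lemma fucik_map_zero_solves_fucik_equation:
  assumes zero: "fucik_map M u0 (e, v, \<eta>) = 0" and "e \<noteq> 1" and "\<forall>i. 0 < v $ i * u0 $ i"
  shows "M *v v = e *\<^sub>R (vabs v + \<eta> *\<^sub>R v)"
proof -
  let ?Q = "orth_proj (mat_ker (transpose M))"
  have Q: "linear ?Q" by (simp add: linear_orth_proj subspace_mat_ker)
  define y where "y = Xi u0 *v v + \<eta> *\<^sub>R v"
  have eq: "M *v v + (?Q y - e *\<^sub>R y) = 0"
    using zero by (simp add: fucik_map_def y_def zero_prod_def algebra_simps)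
  have "(1 - e) *\<^sub>R ?Q y = 0"
    using orth_proj_ker_transpose_eq_0[OF eq]
    by (simp add: linear_diff[OF Q] linear_scale[OF Q] orth_proj_idem subspace_mat_ker scaleR_diff_left)
  then have "?Q y = 0" using \<open>e \<noteq> 1\<close> by simp
  then have "M *v v = e *\<^sub>R y" using eq by (simp add: algebra_simps)
  then show ?thesis using Xi_mult_eq_vabs[OF assms(3)] by (simp add: y_def)
qed

lemma fucik_equation_scaleR:
  assumes "0 \<le> c" and "M *v v = e *\<^sub>R (vabs v + \<eta> *\<^sub>R v)"
  shows "M *v (c *\<^sub>R v) = e *\<^sub>R (vabs (c *\<^sub>R v) + \<eta> *\<^sub>R (c *\<^sub>R v))"
  using assms by (simp add: matrix_vector_mult_scaleR vabs_scaleR algebra_simps)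

lemma fucik_branch_from_fucik_map_zeros:
  assumes "open E0" and "0 \<in> E0" and cont: "continuous_on E0 x" and x0: "x 0 = (u0, \<eta>0)"
    and zero: "\<And>e. e \<in> E0 \<Longrightarrow> fucik_map M u0 (e, x e) = 0"
    and u0_norm: "norm u0 = 1" and u0_nz: "\<forall>i. u0 $ i \<noteq> 0"
  shows "\<exists>E \<eta> u. open E \<and> 0 \<in> E \<and> continuous_on E \<eta> \<and> continuous_on E u \<and>
           u 0 = u0 \<and> \<eta> 0 = \<eta>0 \<and>
           (\<forall>e\<in>E. M *v u e = e *\<^sub>R (vabs (u e) + \<eta> e *\<^sub>R u e) \<and> norm (u e) = 1)"
proof -
  define W where "W = {v. \<forall>i. 0 < v $ i * u0 $ i}"
  define E where "E = E0 \<inter> (\<lambda>e. (e, fst (x e))) -` ({..<1} \<times> W)"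
  define u where "u e = (1 / norm (fst (x e))) *\<^sub>R fst (x e)" for e
  have E: "e \<in> E0" "e < 1" "\<forall>i. 0 < fst (x e) $ i * u0 $ i" if "e \<in> E" for e
    using that by (auto simp: E_def W_def)
  show ?thesis
  proof (intro exI[of _ E] exI[of _ "\<lambda>e. snd (x e)"] exI[of _ u] conjI ballI)
    have "continuous_on E0 (\<lambda>e. (e, fst (x e)))" by (intro continuous_intros cont)
    moreover have "open ({..<1::real} \<times> W)"
      unfolding W_def by (intro open_Times open_lessThan open_same_signs)
    ultimately show "open E" unfolding E_def by (rule continuous_open_preimage[OF _ \<open>open E0\<close>])
    have "0 < u0 $ i * u0 $ i" for i using u0_nz by (metis not_real_square_gt_zero)
    then show "0 \<in> E" using \<open>0 \<in> E0\<close> x0 by (simp add: E_def W_def)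
    have cont_E: "continuous_on E x" using cont by (rule continuous_on_subset) (auto simp: E_def)
    then show "continuous_on E (\<lambda>e. snd (x e))" by (intro continuous_intros)
    have nonzero: "fst (x e) \<noteq> 0" if "e \<in> E" for e
      using E(3)[OF that] by (metis less_irrefl mult_zero_left zero_index)
    show "continuous_on E u" unfolding u_def using cont_E nonzero by (intro continuous_intros) auto
    show "u 0 = u0" using x0 u0_norm by (simp add: u_def)
    show "snd (x 0) = \<eta>0" using x0 by simp
    fix e assume "e \<in> E"
    show "norm (u e) = 1" using nonzero[OF \<open>e \<in> E\<close>] by (simp add: u_def)
    have "fucik_map M u0 (e, fst (x e), snd (x e)) = 0" using zero E(1)[OF \<open>e \<in> E\<close>] by simp
    then have "M *v fst (x e) = e *\<^sub>R (vabs (fst (x e)) + snd (x e) *\<^sub>R fst (x e))"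
      using E(2,3)[OF \<open>e \<in> E\<close>] by (intro fucik_map_zero_solves_fucik_equation) auto
    then show "M *v u e = e *\<^sub>R (vabs (u e) + snd (x e) *\<^sub>R u e)"
      unfolding u_def by (intro fucik_equation_scaleR) auto
  qed
qed

theorem theorem3:
  fixes A :: "real^'n^'n" and lam :: real and u0 :: "real^'n" and \<eta>0 :: real
  assumes eig: "\<exists>v. v \<noteq> 0 \<and> A *v v = lam *\<^sub>R v"
    and u0_ker: "u0 \<in> mat_ker (A - lam *\<^sub>R mat 1)"
    and u0_norm: "norm u0 = 1"
    and u0_nz: "\<forall>i. u0 $ i \<noteq> 0"
    and eta0: "\<forall>v \<in> mat_ker (transpose A - lam *\<^sub>R mat 1). (vabs u0 + \<eta>0 *\<^sub>R u0) \<bullet> v = 0"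
    and nondeg: "\<And>c w. w \<in> mat_ker (A - lam *\<^sub>R mat 1) \<Longrightarrow> u0 \<bullet> w = 0 \<Longrightarrow>
        orth_proj (mat_ker (transpose A - lam *\<^sub>R mat 1)) (Xi u0 *v w + \<eta>0 *\<^sub>R w)
        + c *\<^sub>R orth_proj (mat_ker (transpose A - lam *\<^sub>R mat 1)) u0 = 0
        \<Longrightarrow> w = 0 \<and> c = 0"
  shows "\<exists>E \<eta> u. open E \<and> (0::real) \<in> E \<and>
           continuous_on E \<eta> \<and> continuous_on E (u :: real \<Rightarrow> real^'n) \<and>
           u 0 = u0 \<and> \<eta> 0 = \<eta>0 \<and>
           (\<forall>\<epsilon>\<in>E. (A - lam *\<^sub>R mat 1) *v u \<epsilon> = \<epsilon> *\<^sub>R (vabs (u \<epsilon>) + \<eta> \<epsilon> *\<^sub>R u \<epsilon>)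
                    \<and> norm (u \<epsilon>) = 1)"
proof -
  define M where "M = A - lam *\<^sub>R mat 1"
  have ker_transpose: "mat_ker (transpose A - lam *\<^sub>R mat 1) = mat_ker (transpose M)"
    by (simp add: M_def transpose_diff transpose_scalar)
  have "M *v u0 = 0" using u0_ker by (simp add: M_def mat_ker_def)
  have "fucik_map M u0 (0, u0, \<eta>0) = 0"
    using \<open>M *v u0 = 0\<close> u0_norm u0_nz eta0 by (simp add: fucik_map_base_point ker_transpose)
  moreover have "inj (\<lambda>h. fucik_map_deriv M u0 (0, u0, \<eta>0) (0, h))"
    using \<open>M *v u0 = 0\<close> nondeg by (simp add: inj_fucik_map_deriv ker_transpose M_def)
  ultimately obtain E0 x where branch: "open E0" "0 \<in> E0" "continuous_on E0 x" "x 0 = (u0, \<eta>0)"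
    "\<And>e. e \<in> E0 \<Longrightarrow> fucik_map M u0 (e, x e) = 0"
    by (rule implicit_function_theorem[OF open_UNIV UNIV_I has_derivative_fucik_map
          continuous_on_fucik_map_deriv]) blast
  from fucik_branch_from_fucik_map_zeros[OF branch u0_norm u0_nz] show ?thesis
    unfolding M_def .
qed

end
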